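(* Let $(\Omega,\mathcal{F})$ be a measurable space, $\mathrm{B}_b$ the space of bounded real-valued measurable functions on $\Omega$, and $C\subset\mathrm{B}_b$ with $0\in C$ and $X+m\in C$ for all $X\in C$, $m\in\mathbb{R}$. Let $H\colon C\to\mathbb{R}$ be a premium principle and define $$R_{\mathrm{Max}}(X):=\inf\{H(X_0)\mid X_0\in C,\ X_0\ge X\},\quad X\in\mathrm{B}_b.$$ Then $R_{\mathrm{Max}}\colon\mathrm{B}_b\to\mathbb{R}$ is a risk measure with $R_{\mathrm{Max}}(X)\le H(X)$ for all $X\in C$; moreover $D_{\mathrm{Min}}(X):=H(X)-R_{\mathrm{Max}}(X)$ defines a deviation measure on $C$, and $H(X)=R_{\mathrm{Max}}(X)+D_{\mathrm{Min}}(X)$ for all $X\in C$. For every other decomposition $H(X)=R(X)+D(X)$, $X\in C$, with a risk measure $R\colon\mathrm{B}_b\to\mathbb{R}$ and a deviation measure $D\colon C\to\mathbb{R}$, one has $R\le R_{\mathrm{Max}}$ (on $\mathrm{B}_b$) and $D\ge D_{\mathrm{Min}}$ (on $C$).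
   Context: Constants are identified with constant functions; $\le$ is the pointwise order. A premium principle is a map $H\colon C\to\mathbb{R}$ with (P1) $H(X+m)=H(X)+m$ for $X\in C$, $m\in\mathbb{R}$, and (P2) $H(0)=0$ and $H(X)\ge0$ for $X\in C$ with $X\ge0$. A risk measure is a map $R\colon\mathrm{B}_b\to\mathbb{R}$ with $R(X+m)=R(X)+m$ for $X\in\mathrm{B}_b$, $m\in\mathbb{R}$, $R(0)=0$, and $R(X)\le R(Y)$ whenever $X\le Y$. A deviation measure is a map $D\colon C\to\mathbb{R}$ with $D(X+m)=D(X)$ for $X\in C$, $m\in\mathbb{R}$, $D(0)=0$, and $D\ge0$ on $C$. *)

theory Defs
  imports "HOL-Analysis.Analysis"
begin

definition Bb :: "'a measure \<Rightarrow> ('a \<Rightarrow> real) set" where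
  "Bb M = {X. X \<in> borel_measurable M \<and> (\<exists>B. \<forall>\<omega>\<in>space M. \<bar>X \<omega>\<bar> \<le> B)}"

definition fle :: "'a measure \<Rightarrow> ('a \<Rightarrow> real) \<Rightarrow> ('a \<Rightarrow> real) \<Rightarrow> bool" where
  "fle M X Y \<longleftrightarrow> (\<forall>\<omega>\<in>space M. X \<omega> \<le> Y \<omega>)"

definition premium_principle ::
  "'a measure \<Rightarrow> ('a \<Rightarrow> real) set \<Rightarrow> (('a \<Rightarrow> real) \<Rightarrow> real) \<Rightarrow> bool" where
  "premium_principle M C H \<longleftrightarrow>
     (\<forall>X\<in>C. \<forall>m. H (\<lambda>\<omega>. X \<omega> + m) = H X + m) \<and>
     H (\<lambda>_. 0) = 0 \<and>
     (\<forall>X\<in>C. fle M (\<lambda>_. 0) X \<longrightarrow> H X \<ge> 0)"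

definition risk_measure :: "'a measure \<Rightarrow> (('a \<Rightarrow> real) \<Rightarrow> real) \<Rightarrow> bool" where
  "risk_measure M R \<longleftrightarrow>
     (\<forall>X\<in>Bb M. \<forall>m. R (\<lambda>\<omega>. X \<omega> + m) = R X + m) \<and>
     R (\<lambda>_. 0) = 0 \<and>
     (\<forall>X\<in>Bb M. \<forall>Y\<in>Bb M. fle M X Y \<longrightarrow> R X \<le> R Y)"

definition deviation_measure ::
  "'a measure \<Rightarrow> ('a \<Rightarrow> real) set \<Rightarrow> (('a \<Rightarrow> real) \<Rightarrow> real) \<Rightarrow> bool" where
  "deviation_measure M C D \<longleftrightarrow>
     (\<forall>X\<in>C. \<forall>m. D (\<lambda>\<omega>. X \<omega> + m) = D X) \<and>
     D (\<lambda>_. 0) = 0 \<and>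
     (\<forall>X\<in>C. D X \<ge> 0)"

definition R_Max ::
  "'a measure \<Rightarrow> ('a \<Rightarrow> real) set \<Rightarrow> (('a \<Rightarrow> real) \<Rightarrow> real) \<Rightarrow> ('a \<Rightarrow> real) \<Rightarrow> real" where
  "R_Max M C H X = Inf {H X0 | X0. X0 \<in> C \<and> fle M X X0}"

definition D_Min ::
  "'a measure \<Rightarrow> ('a \<Rightarrow> real) set \<Rightarrow> (('a \<Rightarrow> real) \<Rightarrow> real) \<Rightarrow> ('a \<Rightarrow> real) \<Rightarrow> real" where
  "D_Min M C H X = H X - R_Max M C H X"

end

theory Submission
  imports Defs
begin

text \<open>Constant
  positions dominate every bounded \<open>X\<close>, and \<open>X\<^sub>0 \<ge> X \<ge> -B\<close> forces \<open>H X\<^sub>0 \<ge> -B\<close>, so the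
  infimum is finite. Shifting by constants and enlarging \<open>X\<close> act on the dominating positions
  in the obvious way, so cash invariance and monotonicity pass from \<open>H\<close> to \<open>R_Max\<close>, while
  \<open>R_Max \<le> H\<close> on \<open>C\<close> makes \<open>D_Min\<close> nonnegative. For any decomposition \<open>H = R + D\<close>,
  monotonicity of \<open>R\<close> and \<open>D \<ge> 0\<close> give \<open>R X \<le> R X\<^sub>0 \<le> H X\<^sub>0\<close> for every dominating \<open>X\<^sub>0\<close>,
  hence \<open>R \<le> R_Max\<close> and, subtracting from \<open>H\<close>, \<open>D \<ge> D_Min\<close>.\<close>

lemma Bb_add_const:
  assumes "X \<in> Bb M"
  shows "(\<lambda>\<omega>. X \<omega> + m) \<in> Bb M"
proof -
  from assms obtain B where B: "\<forall>\<omega>\<in>space M. \<bar>X \<omega>\<bar> \<le> B" and "X \<in> borel_measurable M"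
    unfolding Bb_def by auto
  then have "(\<lambda>\<omega>. X \<omega> + m) \<in> borel_measurable M" by measurable
  moreover have "\<forall>\<omega>\<in>space M. \<bar>X \<omega> + m\<bar> \<le> B + \<bar>m\<bar>" using B by (smt (verit))
  ultimately show ?thesis unfolding Bb_def by blast
qed

locale premium_setting =
  fixes M :: "'a measure" and C :: "('a \<Rightarrow> real) set" and H :: "('a \<Rightarrow> real) \<Rightarrow> real"
  assumes C_subset_Bb: "C \<subseteq> Bb M"
    and zero_in_C: "(\<lambda>_. 0) \<in> C"
    and C_add_const: "\<And>X m. X \<in> C \<Longrightarrow> (\<lambda>\<omega>. X \<omega> + m) \<in> C"
    and premium: "premium_principle M C H"
begin

lemma H_add_const: "X \<in> C \<Longrightarrow> H (\<lambda>\<omega>. X \<omega> + m) = H X + m"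
  and H_zero: "H (\<lambda>_. 0) = 0"
  and H_nonneg: "X \<in> C \<Longrightarrow> fle M (\<lambda>_. 0) X \<Longrightarrow> H X \<ge> 0"
  using premium unfolding premium_principle_def by auto

lemma const_in_C: "(\<lambda>_. c) \<in> C"
  using C_add_const[OF zero_in_C, of c] by simp

abbreviation premiums_above :: "('a \<Rightarrow> real) \<Rightarrow> real set" where
  "premiums_above X \<equiv> {H X0 | X0. X0 \<in> C \<and> fle M X X0}"

lemma premiums_above_nonempty:
  assumes "X \<in> Bb M"
  shows "premiums_above X \<noteq> {}"
proof -
  from assms obtain B where "\<forall>\<omega>\<in>space M. \<bar>X \<omega>\<bar> \<le> B" unfolding Bb_def by auto
  then have "fle M X (\<lambda>_. B)" unfolding fle_def by force
  then show ?thesis using const_in_C by blast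
qed

lemma premiums_above_bdd_below:
  assumes "X \<in> Bb M"
  shows "bdd_below (premiums_above X)"
proof -
  from assms obtain B where B: "\<forall>\<omega>\<in>space M. \<bar>X \<omega>\<bar> \<le> B" unfolding Bb_def by auto
  have "-B \<le> H X0" if "X0 \<in> C" "fle M X X0" for X0
  proof -
    have "fle M (\<lambda>_. 0) (\<lambda>\<omega>. X0 \<omega> + B)" using that(2) B unfolding fle_def by force
    then have "0 \<le> H (\<lambda>\<omega>. X0 \<omega> + B)" using H_nonneg C_add_const[OF that(1)] by blast
    then show ?thesis using H_add_const[OF that(1)] by simp
  qed
  then show ?thesis unfolding bdd_below_def by blast
qed

lemma R_Max_le_premium:
  assumes "X \<in> Bb M" "X0 \<in> C" "fle M X X0"
  shows "R_Max M C H X \<le> H X0"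
  unfolding R_Max_def
  using cInf_lower[OF _ premiums_above_bdd_below[OF assms(1)]] assms(2,3) by blast

lemma R_Max_greatest:
  assumes "X \<in> Bb M" "\<And>X0. X0 \<in> C \<Longrightarrow> fle M X X0 \<Longrightarrow> r \<le> H X0"
  shows "r \<le> R_Max M C H X"
  unfolding R_Max_def using assms premiums_above_nonempty by (blast intro: cInf_greatest)

lemma R_Max_le_H: "X \<in> C \<Longrightarrow> R_Max M C H X \<le> H X"
  using C_subset_Bb by (auto intro: R_Max_le_premium simp: fle_def)

lemma R_Max_zero: "R_Max M C H (\<lambda>_. 0) = 0"
proof -
  have "R_Max M C H (\<lambda>_. 0) \<le> 0" using R_Max_le_H[OF zero_in_C] H_zero by simp
  moreover have "0 \<le> R_Max M C H (\<lambda>_. 0)"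
    using zero_in_C C_subset_Bb by (blast intro: R_Max_greatest H_nonneg)
  ultimately show ?thesis by simp
qed

lemma R_Max_add_const_le:
  assumes X: "X \<in> Bb M"
  shows "R_Max M C H (\<lambda>\<omega>. X \<omega> + m) \<le> R_Max M C H X + m"
proof -
  have "R_Max M C H (\<lambda>\<omega>. X \<omega> + m) - m \<le> H X0" if "X0 \<in> C" "fle M X X0" for X0
  proof -
    have "fle M (\<lambda>\<omega>. X \<omega> + m) (\<lambda>\<omega>. X0 \<omega> + m)" using that(2) unfolding fle_def by auto
    then have "R_Max M C H (\<lambda>\<omega>. X \<omega> + m) \<le> H (\<lambda>\<omega>. X0 \<omega> + m)"
      using R_Max_le_premium Bb_add_const[OF X] C_add_const[OF that(1)] by blast
    then show ?thesis using H_add_const[OF that(1)] by simp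
  qed
  then show ?thesis using R_Max_greatest[OF X] by force
qed

lemma R_Max_add_const:
  assumes X: "X \<in> Bb M"
  shows "R_Max M C H (\<lambda>\<omega>. X \<omega> + m) = R_Max M C H X + m"
proof -
  have "R_Max M C H (\<lambda>\<omega>. (X \<omega> + m) + - m) \<le> R_Max M C H (\<lambda>\<omega>. X \<omega> + m) + - m"
    using R_Max_add_const_le[OF Bb_add_const[OF X]] .
  then show ?thesis using R_Max_add_const_le[OF X, of m] by simp
qed

lemma R_Max_mono:
  assumes "X \<in> Bb M" "Y \<in> Bb M" "fle M X Y"
  shows "R_Max M C H X \<le> R_Max M C H Y"
proof (rule R_Max_greatest[OF assms(2)])
  fix X0 assume X0: "X0 \<in> C" "fle M Y X0"
  then have "fle M X X0" using assms(3) unfolding fle_def by force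
  then show "R_Max M C H X \<le> H X0" using R_Max_le_premium assms(1) X0(1) by blast
qed

lemma risk_measure_R_Max: "risk_measure M (R_Max M C H)"
  unfolding risk_measure_def using R_Max_add_const R_Max_zero R_Max_mono by blast

lemma deviation_measure_D_Min: "deviation_measure M C (D_Min M C H)"
  unfolding deviation_measure_def D_Min_def
  using R_Max_add_const H_add_const C_subset_Bb R_Max_zero H_zero R_Max_le_H by auto

lemma risk_le_R_Max:
  assumes R: "risk_measure M R" and D: "deviation_measure M C D"
    and decomp: "\<forall>X\<in>C. H X = R X + D X" and X: "X \<in> Bb M"
  shows "R X \<le> R_Max M C H X"
proof (rule R_Max_greatest[OF X])
  fix X0 assume X0: "X0 \<in> C" "fle M X X0"
  then have "R X \<le> R X0" using R X C_subset_Bb unfolding risk_measure_def by blast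
  moreover have "0 \<le> D X0" using D X0(1) unfolding deviation_measure_def by blast
  ultimately show "R X \<le> H X0" using decomp X0(1) by force
qed

lemma D_Min_le_deviation:
  assumes "risk_measure M R" "deviation_measure M C D"
    and decomp: "\<forall>X\<in>C. H X = R X + D X" and X: "X \<in> C"
  shows "D_Min M C H X \<le> D X"
  using risk_le_R_Max[OF assms(1-3)] X C_subset_Bb decomp unfolding D_Min_def by force

end

theorem theorem2p3:
  fixes M :: "'a measure" and C :: "('a \<Rightarrow> real) set" and H :: "('a \<Rightarrow> real) \<Rightarrow> real"
  assumes "C \<subseteq> Bb M"
    and "(\<lambda>_. 0) \<in> C"
    and "\<And>X m. X \<in> C \<Longrightarrow> (\<lambda>\<omega>. X \<omega> + m) \<in> C"
    and "premium_principle M C H"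
  shows "risk_measure M (R_Max M C H)
    \<and> (\<forall>X\<in>C. R_Max M C H X \<le> H X)
    \<and> deviation_measure M C (D_Min M C H)
    \<and> (\<forall>X\<in>C. H X = R_Max M C H X + D_Min M C H X)
    \<and> (\<forall>R D. risk_measure M R \<and> deviation_measure M C D
           \<and> (\<forall>X\<in>C. H X = R X + D X)
         \<longrightarrow> (\<forall>X\<in>Bb M. R X \<le> R_Max M C H X) \<and> (\<forall>X\<in>C. D_Min M C H X \<le> D X))"
proof -
  interpret premium_setting M C H
    using assms by unfold_locales
  show ?thesis
    using risk_measure_R_Max R_Max_le_H deviation_measure_D_Min
      risk_le_R_Max D_Min_le_deviation
    by (auto simp: D_Min_def)
qed

end
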